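(* Let $G$ be a connected graph of order $n\geq 2$ and let $H$ be a connected graph of order $m\geq 1$. (1) If $0\leq g\leq m-1$, then $\kappa_g(G*H)=1$. (2) Let $k\geq 1$ be an integer such that $G$ has at least one $R_k$-cutset, and let $g$ be an integer with $k(m+1)<g+1\leq (k+1)(m+1)$. Then $G*H$ has an $R_g$-cutset and $$\kappa_g(G*H)=|X|(m+1),$$ where $X$ is a minimum-cardinality vertex subset of $G$ such that $G-X$ is disconnected and every connected component of $G-X$ has at least $k+1$ vertices (i.e. $|X|=\kappa_k(G)$).
   Context: All graphs are finite and simple. The corona $G*H$ is obtained by taking one copy of $G$ and $|V(G)|$ disjoint copies of $H$, and joining every vertex of the $i$-th copy of $H$ to the $i$-th vertex of $G$, for $i=1,\ldots,|V(G)|$. A set $S\subseteq V(G)$ is a cutset if $G-S$ is disconnected. For a non-negative integer $g$, a cutset $S$ is an $R_g$-cutset if every connected component of $G-S$ has at least $g+1$ vertices. If $G$ has at least one $R_g$-cutset, the $g$-extra connectivity $\kappa_g(G)$ is the minimum cardinality of an $R_g$-cutset of $G$. *)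

theory Defs
  imports Main
begin

definition simple_graph :: "'a set \<Rightarrow> ('a \<times> 'a) set \<Rightarrow> bool" where
  "simple_graph V E \<longleftrightarrow> finite V \<and> E \<subseteq> V \<times> V \<and> sym E \<and> irrefl E"

definition reach_in :: "'a set \<Rightarrow> ('a \<times> 'a) set \<Rightarrow> 'a \<Rightarrow> 'a \<Rightarrow> bool" where
  "reach_in W E x y \<longleftrightarrow> (x, y) \<in> (E \<inter> (W \<times> W))\<^sup>*"

definition connected_graph :: "'a set \<Rightarrow> ('a \<times> 'a) set \<Rightarrow> bool" where
  "connected_graph V E \<longleftrightarrow> V \<noteq> {} \<and> (\<forall>x\<in>V. \<forall>y\<in>V. reach_in V E x y)"

definition component_of :: "'a set \<Rightarrow> ('a \<times> 'a) set \<Rightarrow> 'a \<Rightarrow> 'a set" where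
  "component_of W E x = {y \<in> W. reach_in W E x y}"

definition is_cutset :: "'a set \<Rightarrow> ('a \<times> 'a) set \<Rightarrow> 'a set \<Rightarrow> bool" where
  "is_cutset V E S \<longleftrightarrow> S \<subseteq> V \<and>
     (\<exists>x\<in>V - S. \<exists>y\<in>V - S. \<not> reach_in (V - S) E x y)"

definition is_Rg_cutset :: "nat \<Rightarrow> 'a set \<Rightarrow> ('a \<times> 'a) set \<Rightarrow> 'a set \<Rightarrow> bool" where
  "is_Rg_cutset g V E S \<longleftrightarrow> is_cutset V E S \<and>
     (\<forall>x\<in>V - S. card (component_of (V - S) E x) \<ge> g + 1)"

definition has_Rg_cutset :: "nat \<Rightarrow> 'a set \<Rightarrow> ('a \<times> 'a) set \<Rightarrow> bool" where
  "has_Rg_cutset g V E \<longleftrightarrow> (\<exists>S. is_Rg_cutset g V E S)"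

text \<open>g-extra connectivity (meaningful only when an R_g-cutset exists).\<close>
definition extra_conn :: "nat \<Rightarrow> 'a set \<Rightarrow> ('a \<times> 'a) set \<Rightarrow> nat" where
  "extra_conn g V E = Min (card ` {S. is_Rg_cutset g V E S})"

text \<open>Corona G*H: vertices Inl v (v in G) and Inr (v,h) (copy of h in the copy of H at v).\<close>
definition corona_V :: "'a set \<Rightarrow> 'b set \<Rightarrow> ('a + 'a \<times> 'b) set" where
  "corona_V VG VH = Inl ` VG \<union> Inr ` (VG \<times> VH)"

definition corona_E :: "'a set \<Rightarrow> ('a \<times> 'a) set \<Rightarrow> 'b set \<Rightarrow> ('b \<times> 'b) set
    \<Rightarrow> (('a + 'a \<times> 'b) \<times> ('a + 'a \<times> 'b)) set" where
  "corona_E VG EG VH EH =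
     {(Inl u, Inl v) | u v. (u, v) \<in> EG}
   \<union> {(Inr (v, a), Inr (v, b)) | v a b. v \<in> VG \<and> (a, b) \<in> EH}
   \<union> {(Inl v, Inr (v, h)) | v h. v \<in> VG \<and> h \<in> VH}
   \<union> {(Inr (v, h), Inl v) | v h. v \<in> VG \<and> h \<in> VH}"

end

theory Submission
  imports Defs
begin

text \<open>Removing a base vertex v of G*H cuts off the copy of H hanging at v, and every
  remaining component still contains a whole copy of H; so for g < m one vertex is an
  R_g-cutset, while G*H itself is connected. For larger g, no component of (G*H) - S may
  lie inside a copy of H, hence S contains the copy of H at each base vertex it contains.
  Writing T for the base vertices in S, the set S therefore contains the blow-up of T,
  of size |T|(m+1), and T is an R_k-cutset of G, since a component of G - T with c
  vertices lies under a component of (G*H) - S with at most c(m+1) vertices.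
  Conversely, the blow-up of an R_k-cutset of G is an R_g-cutset of G*H.\<close>

lemma reach_in_refl [simp]: "reach_in W E x x"
  by (simp add: reach_in_def)

lemma reach_in_trans: "reach_in W E x y \<Longrightarrow> reach_in W E y z \<Longrightarrow> reach_in W E x z"
  unfolding reach_in_def by (rule rtrancl_trans)

lemma reach_in_edge: "(x, y) \<in> E \<Longrightarrow> x \<in> W \<Longrightarrow> y \<in> W \<Longrightarrow> reach_in W E x y"
  unfolding reach_in_def by auto

lemma reach_in_invariant:
  assumes "reach_in W E x y" "x \<in> A"
    and "\<And>a b. (a, b) \<in> E \<Longrightarrow> a \<in> W \<Longrightarrow> b \<in> W \<Longrightarrow> a \<in> A \<Longrightarrow> b \<in> A"
  shows "y \<in> A"
proof -
  have "(x, y) \<in> (E \<inter> W \<times> W)\<^sup>*"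
    using assms(1) by (simp add: reach_in_def)
  then show ?thesis
    by (induction rule: rtrancl_induct) (use assms in auto)
qed

lemma reach_in_image:
  assumes "reach_in W E x y"
    and "\<And>a b. (a, b) \<in> E \<Longrightarrow> a \<in> W \<Longrightarrow> b \<in> W \<Longrightarrow> (f a, f b) \<in> E' \<and> f a \<in> W' \<and> f b \<in> W'"
  shows "reach_in W' E' (f x) (f y)"
proof -
  have "(x, y) \<in> (E \<inter> W \<times> W)\<^sup>*"
    using assms(1) by (simp add: reach_in_def)
  then have "(f x, f y) \<in> (E' \<inter> W' \<times> W')\<^sup>*"
  proof (induction rule: rtrancl_induct)
    case (step b c)
    then have "(f b, f c) \<in> E' \<inter> W' \<times> W'"
      using assms(2) by auto
    with step.IH show ?case
      by (rule rtrancl_into_rtrancl)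
  qed simp
  then show ?thesis
    by (simp add: reach_in_def)
qed

lemma component_of_subset_if_reach_in:
  "reach_in W E x y \<Longrightarrow> component_of W E y \<subseteq> component_of W E x"
  unfolding component_of_def using reach_in_trans by fastforce

lemma component_of_eq_if_reach_in:
  "reach_in W E x y \<Longrightarrow> reach_in W E y x \<Longrightarrow> component_of W E x = component_of W E y"
  by (simp add: component_of_subset_if_reach_in subset_antisym)

lemma component_of_mono: "W \<subseteq> W' \<Longrightarrow> component_of W E x \<subseteq> component_of W' E x"
  unfolding component_of_def reach_in_def by (auto elim: rtrancl_mono[THEN subsetD, rotated])

lemma finite_component_of: "finite W \<Longrightarrow> finite (component_of W E x)"
  by (simp add: component_of_def)

lemma cutset_nonempty_if_connected: "connected_graph V E \<Longrightarrow> is_cutset V E S \<Longrightarrow> S \<noteq> {}"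
  by (auto simp: connected_graph_def is_cutset_def)

lemma finite_Rg_cutset: "finite V \<Longrightarrow> is_Rg_cutset g V E S \<Longrightarrow> finite S"
  by (auto simp: is_Rg_cutset_def is_cutset_def intro: finite_subset)

lemma finite_card_Rg_cutsets: "finite V \<Longrightarrow> finite (card ` {S. is_Rg_cutset g V E S})"
  by (rule finite_imageI, rule finite_subset[of _ "Pow V"])
    (auto simp: is_Rg_cutset_def is_cutset_def)

lemma extra_conn_le: "finite V \<Longrightarrow> is_Rg_cutset g V E S \<Longrightarrow> extra_conn g V E \<le> card S"
  unfolding extra_conn_def by (auto intro: Min_le finite_card_Rg_cutsets)

lemma extra_conn_attained:
  assumes "finite V" "has_Rg_cutset g V E"
  obtains S where "is_Rg_cutset g V E S" "card S = extra_conn g V E"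
proof -
  have "extra_conn g V E \<in> card ` {S. is_Rg_cutset g V E S}"
    unfolding extra_conn_def
    using assms by (intro Min_in finite_card_Rg_cutsets) (auto simp: has_Rg_cutset_def)
  then show ?thesis
    using that by auto
qed

lemma extra_conn_eqI:
  assumes "finite V" "is_Rg_cutset g V E S" "\<And>S'. is_Rg_cutset g V E S' \<Longrightarrow> card S \<le> card S'"
  shows "extra_conn g V E = card S"
  unfolding extra_conn_def
  using assms by (intro Min_eqI finite_card_Rg_cutsets) auto

lemma corona_E_Inl_Inl_iff [simp]:
  "(Inl u, Inl v) \<in> corona_E VG EG VH EH \<longleftrightarrow> (u, v) \<in> EG"
  by (auto simp: corona_E_def)

lemma corona_E_Inr_Inr_iff [simp]:
  "(Inr (v, a), Inr (w, b)) \<in> corona_E VG EG VH EH \<longleftrightarrow> v = w \<and> v \<in> VG \<and> (a, b) \<in> EH"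
  by (auto simp: corona_E_def)

lemma corona_E_Inl_Inr_iff [simp]:
  "(Inl u, Inr (v, h)) \<in> corona_E VG EG VH EH \<longleftrightarrow> u = v \<and> v \<in> VG \<and> h \<in> VH"
  by (auto simp: corona_E_def)

lemma corona_E_Inr_Inl_iff [simp]:
  "(Inr (v, h), Inl u) \<in> corona_E VG EG VH EH \<longleftrightarrow> u = v \<and> v \<in> VG \<and> h \<in> VH"
  by (auto simp: corona_E_def)

lemma Inl_in_corona_V_iff [simp]: "Inl u \<in> corona_V VG VH \<longleftrightarrow> u \<in> VG"
  by (auto simp: corona_V_def)

lemma Inr_in_corona_V_iff [simp]: "Inr (v, h) \<in> corona_V VG VH \<longleftrightarrow> v \<in> VG \<and> h \<in> VH"
  by (auto simp: corona_V_def)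

text \<open>For U \<subseteq> VG, corona_V U VH is the blow-up of U in G*H: the vertices of U together
  with the copies of H attached to them.\<close>

lemma corona_V_mono: "U \<subseteq> U' \<Longrightarrow> corona_V U VH \<subseteq> corona_V U' VH"
  by (auto simp: corona_V_def)

lemma finite_corona_V [simp]: "finite U \<Longrightarrow> finite VH \<Longrightarrow> finite (corona_V U VH)"
  by (simp add: corona_V_def)

lemma corona_V_Diff: "corona_V U VH - corona_V U' VH = corona_V (U - U') VH"
  by (auto simp: corona_V_def)

lemma card_corona_V:
  assumes "finite U" "finite VH"
  shows "card (corona_V U VH) = card U * (card VH + 1)"
proof -
  have "card (corona_V U VH)
      = card (Inl ` U :: ('a + 'a \<times> 'b) set) + card (Inr ` (U \<times> VH) :: ('a + 'a \<times> 'b) set)"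
    unfolding corona_V_def by (rule card_Un_disjoint) (use assms in auto)
  also have "\<dots> = card U + card U * card VH"
    by (simp add: card_image card_cartesian_product)
  finally show ?thesis
    by simp
qed

lemma card_corona_copy: "card (Inr ` ({v} \<times> VH) :: ('a + 'a \<times> 'b) set) = card VH"
  by (simp add: card_image card_cartesian_product)

lemma corona_reach_Inl:
  "reach_in U EG u w \<Longrightarrow> Inl ` U \<subseteq> W \<Longrightarrow> reach_in W (corona_E VG EG VH EH) (Inl u) (Inl w)"
  by (erule reach_in_image) auto

lemma corona_reach_Inr:
  "reach_in VH EH a b \<Longrightarrow> v \<in> VG \<Longrightarrow> Inr ` ({v} \<times> VH) \<subseteq> W \<Longrightarrow>
    reach_in W (corona_E VG EG VH EH) (Inr (v, a)) (Inr (v, b))"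
  by (erule reach_in_image) auto

lemma corona_reach_base_copy:
  assumes "v \<in> VG" "h \<in> VH" "Inl v \<in> W" "Inr (v, h) \<in> W"
  shows "reach_in W (corona_E VG EG VH EH) (Inl v) (Inr (v, h))"
    and "reach_in W (corona_E VG EG VH EH) (Inr (v, h)) (Inl v)"
  using assms by (auto intro: reach_in_edge)

lemma component_of_corona_Inr_eq:
  "v \<in> VG \<Longrightarrow> h \<in> VH \<Longrightarrow> Inl v \<in> W \<Longrightarrow> Inr (v, h) \<in> W \<Longrightarrow>
    component_of W (corona_E VG EG VH EH) (Inr (v, h)) = component_of W (corona_E VG EG VH EH) (Inl v)"
  by (intro component_of_eq_if_reach_in corona_reach_base_copy)

lemma component_of_corona_base:
  assumes "x \<in> W" "W \<subseteq> corona_V VG VH" "\<And>v h. Inr (v, h) \<in> W \<Longrightarrow> Inl v \<in> W"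
  obtains b where "Inl b \<in> W"
    and "component_of W (corona_E VG EG VH EH) x = component_of W (corona_E VG EG VH EH) (Inl b)"
proof (cases x)
  case (Inl b)
  with assms(1) that show ?thesis
    by simp
next
  case (Inr r)
  then obtain b h where x_eq: "x = Inr (b, h)"
    by (cases r) auto
  with assms have "Inl b \<in> W" "b \<in> VG" "h \<in> VH"
    by auto
  with assms(1) that show ?thesis
    unfolding x_eq by (metis component_of_corona_Inr_eq)
qed

lemma component_of_corona_Inr_subset:
  fixes v :: 'a and VH :: "'b set"
  assumes "Inl v \<notin> W" "a \<in> VH" "EH \<subseteq> VH \<times> VH"
  shows "component_of W (corona_E VG EG VH EH) (Inr (v, a)) \<subseteq> Inr ` ({v} \<times> VH)"
proof
  fix x :: "'a + 'a \<times> 'b"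
  assume "x \<in> component_of W (corona_E VG EG VH EH) (Inr (v, a))"
  then have "reach_in W (corona_E VG EG VH EH) (Inr (v, a)) x"
    by (simp add: component_of_def)
  then show "x \<in> Inr ` ({v} \<times> VH)"
  proof (rule reach_in_invariant)
    fix p q
    assume "(p, q) \<in> corona_E VG EG VH EH" "q \<in> W" "p \<in> Inr ` ({v} \<times> VH)"
    then show "q \<in> Inr ` ({v} \<times> VH)"
      using assms by (cases q) (auto simp: corona_E_def)
  qed (use assms in auto)
qed

lemma copy_subset_component_of_corona_Inr:
  fixes v :: 'a and VH :: "'b set"
  assumes "connected_graph VH EH" "v \<in> VG" "a \<in> VH" "Inr ` ({v} \<times> VH) \<subseteq> W"
  shows "Inr ` ({v} \<times> VH) \<subseteq> component_of W (corona_E VG EG VH EH) (Inr (v, a))"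
proof
  fix x :: "'a + 'a \<times> 'b"
  assume "x \<in> Inr ` ({v} \<times> VH)"
  then obtain b where b: "b \<in> VH" "x = Inr (v, b)"
    by auto
  have "reach_in W (corona_E VG EG VH EH) (Inr (v, a)) (Inr (v, b))"
    using assms b by (intro corona_reach_Inr) (auto simp: connected_graph_def)
  then show "x \<in> component_of W (corona_E VG EG VH EH) (Inr (v, a))"
    using assms(4) b by (auto simp: component_of_def)
qed

lemma component_of_corona_V:
  assumes "U \<subseteq> VG" "u \<in> U" "EH \<subseteq> VH \<times> VH"
  shows "component_of (corona_V U VH) (corona_E VG EG VH EH) (Inl u) = corona_V (component_of U EG u) VH"
    (is "?C = corona_V ?D VH")
proof
  show "?C \<subseteq> corona_V ?D VH"
  proof
    fix x
    assume "x \<in> ?C"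
    then have "reach_in (corona_V U VH) (corona_E VG EG VH EH) (Inl u) x"
      by (simp add: component_of_def)
    then show "x \<in> corona_V ?D VH"
    proof (rule reach_in_invariant)
      fix p q
      assume pq: "(p, q) \<in> corona_E VG EG VH EH" "q \<in> corona_V U VH" "p \<in> corona_V ?D VH"
      then obtain w where w: "w \<in> ?D" "p = Inl w \<or> (\<exists>h. p = Inr (w, h))"
        by (auto simp: corona_V_def)
      show "q \<in> corona_V ?D VH"
      proof (cases q)
        case (Inl w')
        with pq w have "w' \<in> U" "w' = w \<or> (w, w') \<in> EG"
          by (auto simp: corona_E_def)
        with w have "w' \<in> ?D"
          using reach_in_trans[OF _ reach_in_edge] by (fastforce simp: component_of_def)
        with Inl show ?thesis
          by (simp add: corona_V_def)
      next
        case (Inr r)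
        with pq w assms(3) show ?thesis
          by (cases r) (auto simp: corona_E_def corona_V_def)
      qed
    qed (use assms(2) in \<open>simp add: component_of_def corona_V_def\<close>)
  qed
next
  show "corona_V ?D VH \<subseteq> ?C"
  proof
    fix x
    assume x: "x \<in> corona_V ?D VH"
    then obtain w where w: "w \<in> U" "reach_in U EG u w" "x = Inl w \<or> (\<exists>h\<in>VH. x = Inr (w, h))"
      by (auto simp: corona_V_def component_of_def)
    have "x \<in> corona_V U VH"
      using w by (auto simp: corona_V_def)
    moreover have "reach_in (corona_V U VH) (corona_E VG EG VH EH) (Inl u) (Inl w)"
      by (rule corona_reach_Inl[OF w(2)]) (auto simp: corona_V_def)
    moreover have "reach_in (corona_V U VH) (corona_E VG EG VH EH) (Inl w) x"
      using w assms(1) by (auto intro: corona_reach_base_copy)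
    ultimately show "x \<in> ?C"
      by (auto simp: component_of_def intro: reach_in_trans)
  qed
qed

lemma connected_corona:
  assumes "connected_graph VG EG"
  shows "connected_graph (corona_V VG VH) (corona_E VG EG VH EH)"
proof -
  let ?V = "corona_V VG VH" and ?E = "corona_E VG EG VH EH"
  obtain v where v: "v \<in> VG"
    using assms by (auto simp: connected_graph_def)
  have lift: "reach_in ?V ?E (Inl a) (Inl b)" if "a \<in> VG" "b \<in> VG" for a b
    using assms that by (intro corona_reach_Inl) (auto simp: connected_graph_def corona_V_def)
  have via_v: "reach_in ?V ?E x (Inl v) \<and> reach_in ?V ?E (Inl v) x" if "x \<in> ?V" for x
  proof (cases x)
    case (Inl w)
    with that v lift show ?thesis
      by simp
  next
    case (Inr r)
    then obtain w h where "x = Inr (w, h)"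
      by (cases r) auto
    with that v lift show ?thesis
      using corona_reach_base_copy[of w VG h VH ?V EG EH] by (auto intro: reach_in_trans)
  qed
  have "Inl v \<in> ?V"
    using v by simp
  with via_v show ?thesis
    unfolding connected_graph_def by (blast intro: reach_in_trans)
qed

lemma corona_base_vertex_Rg_cutset:
  fixes v :: 'a and VH :: "'b set"
  assumes "connected_graph VH EH" "EH \<subseteq> VH \<times> VH" "finite VG" "finite VH"
    and "v \<in> VG" "u \<in> VG" "u \<noteq> v" "g < card VH"
  shows "is_Rg_cutset g (corona_V VG VH) (corona_E VG EG VH EH) {Inl v}"
  unfolding is_Rg_cutset_def is_cutset_def
proof (intro conjI ballI)
  let ?W = "corona_V VG VH - {Inl v}" and ?E = "corona_E VG EG VH EH"
  obtain h where h: "h \<in> VH"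
    using assms(1) by (auto simp: connected_graph_def)
  show "{Inl v} \<subseteq> corona_V VG VH"
    using assms(5) by simp
  have "Inl v \<notin> ?W"
    by simp
  then have "component_of ?W ?E (Inr (v, h)) \<subseteq> Inr ` ({v} \<times> VH)"
    using h assms(2) by (rule component_of_corona_Inr_subset)
  then have "Inl u \<notin> component_of ?W ?E (Inr (v, h))"
    by auto
  then show "\<exists>x\<in>?W. \<exists>y\<in>?W. \<not> reach_in ?W ?E x y"
    using assms(5-7) h by (intro bexI[of _ "Inr (v, h)"] bexI[of _ "Inl u"])
      (auto simp: component_of_def)
  fix x
  assume x: "x \<in> ?W"
  obtain w a where wa: "w \<in> VG" "a \<in> VH" "reach_in ?W ?E x (Inr (w, a))"
  proof (cases x)
    case (Inl w)
    with x h show ?thesis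
      by (intro that[of w h] reach_in_edge) auto
  next
    case (Inr r)
    with x that show ?thesis
      by (cases r) auto
  qed
  have "Inr ` ({w} \<times> VH) \<subseteq> ?W"
    using wa(1) by auto
  with assms(1) wa(1,2) have "Inr ` ({w} \<times> VH) \<subseteq> component_of ?W ?E (Inr (w, a))"
    by (rule copy_subset_component_of_corona_Inr)
  also have "\<dots> \<subseteq> component_of ?W ?E x"
    by (rule component_of_subset_if_reach_in[OF wa(3)])
  finally have "card (Inr ` ({w} \<times> VH) :: ('a + 'a \<times> 'b) set) \<le> card (component_of ?W ?E x)"
    using assms(3,4) by (intro card_mono finite_component_of) simp
  then have "card VH \<le> card (component_of ?W ?E x)"
    by (simp only: card_corona_copy)
  then show "g + 1 \<le> card (component_of ?W ?E x)"
    using assms(8) by simp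
qed

lemma corona_extra_conn_small:
  fixes VG :: "'a set" and VH :: "'b set"
  assumes "simple_graph VG EG" "connected_graph VG EG" "simple_graph VH EH" "connected_graph VH EH"
    and "2 \<le> card VG" "g < card VH"
  shows "has_Rg_cutset g (corona_V VG VH) (corona_E VG EG VH EH)
    \<and> extra_conn g (corona_V VG VH) (corona_E VG EG VH EH) = 1"
proof -
  have fin: "finite VG" "finite VH" and EH: "EH \<subseteq> VH \<times> VH"
    using assms(1,3) by (auto simp: simple_graph_def)
  have "\<not> card VG \<le> Suc 0"
    using assms(5) by simp
  then obtain u v where "u \<in> VG" "v \<in> VG" "u \<noteq> v"
    using fin(1) by (auto simp: card_le_Suc0_iff_eq)
  then have cut: "is_Rg_cutset g (corona_V VG VH) (corona_E VG EG VH EH) {Inl v}"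
    using corona_base_vertex_Rg_cutset assms(4,6) fin EH by metis
  have "extra_conn g (corona_V VG VH) (corona_E VG EG VH EH) = card {Inl v :: 'a + 'a \<times> 'b}"
  proof (rule extra_conn_eqI[OF _ cut])
    show "finite (corona_V VG VH)"
      using fin by simp
    fix S
    assume S: "is_Rg_cutset g (corona_V VG VH) (corona_E VG EG VH EH) S"
    then have "S \<noteq> {}"
      using cutset_nonempty_if_connected[OF connected_corona[OF assms(2)]]
      by (auto simp: is_Rg_cutset_def)
    moreover have "finite S"
      using finite_corona_V[OF fin] S by (rule finite_Rg_cutset)
    ultimately show "card {Inl v} \<le> card S"
      by (simp add: Suc_leI card_gt_0_iff)
  qed
  with cut show ?thesis
    by (auto simp: has_Rg_cutset_def)
qed

lemma corona_V_Rg_cutset: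
  fixes VG :: "'a set" and VH :: "'b set"
  assumes X: "is_Rg_cutset k VG EG X" and "finite VG" "finite VH" "EH \<subseteq> VH \<times> VH"
    and g: "g + 1 \<le> (k + 1) * (card VH + 1)"
  shows "is_Rg_cutset g (corona_V VG VH) (corona_E VG EG VH EH) (corona_V X VH)"
proof -
  let ?W = "corona_V (VG - X) VH" and ?E = "corona_E VG EG VH EH"
  have "X \<subseteq> VG"
    using X by (simp add: is_Rg_cutset_def is_cutset_def)
  have comp: "component_of ?W ?E (Inl u) = corona_V (component_of (VG - X) EG u) VH"
    if "u \<in> VG - X" for u
    using that assms(4) by (intro component_of_corona_V) auto
  have "\<exists>x\<in>?W. \<exists>y\<in>?W. \<not> reach_in ?W ?E x y"
  proof -
    obtain u w where uw: "u \<in> VG - X" "w \<in> VG - X" "\<not> reach_in (VG - X) EG u w"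
      using X by (auto simp: is_Rg_cutset_def is_cutset_def)
    then have "Inl w \<notin> corona_V (component_of (VG - X) EG u) VH"
      by (simp add: component_of_def)
    then have "Inl w \<notin> component_of ?W ?E (Inl u)"
      using comp[OF uw(1)] by simp
    with uw show ?thesis
      by (intro bexI[of _ "Inl u"] bexI[of _ "Inl w"]) (auto simp: component_of_def)
  qed
  moreover have "g + 1 \<le> card (component_of ?W ?E x)" if x: "x \<in> ?W" for x
  proof -
    obtain b where "Inl b \<in> ?W" and comp_x: "component_of ?W ?E x = component_of ?W ?E (Inl b)"
      using x by (rule component_of_corona_base) (auto simp: corona_V_def)
    then have b: "b \<in> VG - X"
      by simp
    let ?C = "component_of (VG - X) EG b"
    have "k + 1 \<le> card ?C"
      using X b by (simp add: is_Rg_cutset_def)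
    then have "(k + 1) * (card VH + 1) \<le> card ?C * (card VH + 1)"
      by (rule mult_le_mono1)
    also have "\<dots> = card (component_of ?W ?E x)"
      using assms(2,3) b by (simp add: comp_x comp card_corona_V finite_component_of)
    finally show ?thesis
      using g by simp
  qed
  ultimately show ?thesis
    using \<open>X \<subseteq> VG\<close> unfolding is_Rg_cutset_def is_cutset_def corona_V_Diff
    by (simp add: corona_V_mono)
qed

lemma corona_Rg_cutset_copy_subset:
  fixes VH :: "'b set"
  assumes S: "is_Rg_cutset g (corona_V VG VH) (corona_E VG EG VH EH) S"
    and "card VH \<le> g" "finite VH" "EH \<subseteq> VH \<times> VH" "Inl v \<in> S" "h \<in> VH"
  shows "Inr (v, h) \<in> S"
proof (rule ccontr)
  let ?W = "corona_V VG VH - S" and ?E = "corona_E VG EG VH EH"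
  assume "Inr (v, h) \<notin> S"
  moreover have "v \<in> VG"
    using S assms(5) by (auto simp: is_Rg_cutset_def is_cutset_def)
  ultimately have x: "Inr (v, h) \<in> ?W"
    using assms(6) by simp
  have "Inl v \<notin> ?W"
    using assms(5) by simp
  then have "card (component_of ?W ?E (Inr (v, h))) \<le> card (Inr ` ({v} \<times> VH) :: ('a + 'a \<times> 'b) set)"
    using assms(3,4,6) by (intro card_mono component_of_corona_Inr_subset) auto
  also have "\<dots> = card VH"
    by (rule card_corona_copy)
  finally show False
    using S x assms(2) by (force simp: is_Rg_cutset_def)
qed

lemma corona_Rg_cutset_base:
  fixes VG :: "'a set" and VH :: "'b set"
  assumes S: "is_Rg_cutset g (corona_V VG VH) (corona_E VG EG VH EH) S"
    and copies: "\<And>v h. Inl v \<in> S \<Longrightarrow> h \<in> VH \<Longrightarrow> Inr (v, h) \<in> S"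
    and "finite VG" "finite VH" "EH \<subseteq> VH \<times> VH" and g: "k * (card VH + 1) < g + 1"
  shows "is_Rg_cutset k VG EG {v \<in> VG. Inl v \<in> S}"
proof -
  let ?T = "{v \<in> VG. Inl v \<in> S}" and ?W = "corona_V VG VH - S" and ?E = "corona_E VG EG VH EH"
  have W_sub: "?W \<subseteq> corona_V (VG - ?T) VH"
    using copies by (auto simp: corona_V_def)
  have base: "\<exists>b\<in>VG - ?T. component_of ?W ?E x = component_of ?W ?E (Inl b)" if "x \<in> ?W" for x
  proof -
    obtain b where "Inl b \<in> ?W" "component_of ?W ?E x = component_of ?W ?E (Inl b)"
      using \<open>x \<in> ?W\<close> by (rule component_of_corona_base) (use copies in auto)
    then show ?thesis
      by auto
  qed
  have "\<exists>u\<in>VG - ?T. \<exists>w\<in>VG - ?T. \<not> reach_in (VG - ?T) EG u w"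
  proof -
    obtain x y where xy: "x \<in> ?W" "y \<in> ?W" "\<not> reach_in ?W ?E x y"
      using S by (auto simp: is_Rg_cutset_def is_cutset_def)
    obtain u w where u: "u \<in> VG - ?T" "component_of ?W ?E x = component_of ?W ?E (Inl u)"
      and w: "w \<in> VG - ?T" "component_of ?W ?E y = component_of ?W ?E (Inl w)"
      using base[OF xy(1)] base[OF xy(2)] by blast
    have "\<not> reach_in (VG - ?T) EG u w"
    proof
      assume "reach_in (VG - ?T) EG u w"
      then have "reach_in ?W ?E (Inl u) (Inl w)"
        by (rule corona_reach_Inl) auto
      then have "component_of ?W ?E y \<subseteq> component_of ?W ?E x"
        unfolding u(2) w(2) by (rule component_of_subset_if_reach_in)
      moreover have "y \<in> component_of ?W ?E y"
        using xy(2) by (simp add: component_of_def)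
      ultimately show False
        using xy(3) by (auto simp: component_of_def)
    qed
    with u w show ?thesis
      by blast
  qed
  moreover have "k + 1 \<le> card (component_of (VG - ?T) EG u)" if u: "u \<in> VG - ?T" for u
  proof -
    let ?C = "component_of (VG - ?T) EG u"
    have "g + 1 \<le> card (component_of ?W ?E (Inl u))"
      using S u by (simp add: is_Rg_cutset_def)
    also have "\<dots> \<le> card (component_of (corona_V (VG - ?T) VH) ?E (Inl u))"
      using W_sub assms(3,4) by (intro card_mono finite_component_of component_of_mono)
        (auto simp: corona_V_def)
    also have "\<dots> = card ?C * (card VH + 1)"
      using u assms(3-5) by (simp add: component_of_corona_V card_corona_V finite_component_of)
    finally have "k * (card VH + 1) < card ?C * (card VH + 1)"
      using g by simp
    then have "k < card ?C"
      by (rule mult_right_less_imp_less) simp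
    then show ?thesis
      by simp
  qed
  ultimately show ?thesis
    unfolding is_Rg_cutset_def is_cutset_def by auto
qed

lemma corona_extra_conn_large:
  fixes VG :: "'a set" and VH :: "'b set"
  assumes "simple_graph VG EG" "simple_graph VH EH" and k: "1 \<le> k" and "has_Rg_cutset k VG EG"
    and lower: "k * (card VH + 1) < g + 1" and upper: "g + 1 \<le> (k + 1) * (card VH + 1)"
  shows "has_Rg_cutset g (corona_V VG VH) (corona_E VG EG VH EH)
    \<and> extra_conn g (corona_V VG VH) (corona_E VG EG VH EH) = extra_conn k VG EG * (card VH + 1)"
proof -
  let ?V = "corona_V VG VH" and ?E = "corona_E VG EG VH EH"
  have fin: "finite VG" "finite VH" and EH: "EH \<subseteq> VH \<times> VH"
    using assms(1,2) by (auto simp: simple_graph_def)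
  obtain X where X: "is_Rg_cutset k VG EG X" "card X = extra_conn k VG EG"
    using extra_conn_attained[OF fin(1) assms(4)] .
  have fin_X: "finite X"
    using fin(1) X(1) by (rule finite_Rg_cutset)
  have cut: "is_Rg_cutset g ?V ?E (corona_V X VH)"
    using X(1) fin EH upper by (rule corona_V_Rg_cutset)
  have "extra_conn g ?V ?E = card (corona_V X VH)"
  proof (rule extra_conn_eqI[OF _ cut])
    show "finite ?V"
      using fin by simp
    fix S
    assume S: "is_Rg_cutset g ?V ?E S"
    let ?T = "{v \<in> VG. Inl v \<in> S}"
    have "card VH + 1 \<le> k * (card VH + 1)"
      using mult_le_mono1[OF k, of "card VH + 1"] by simp
    with lower have "card VH \<le> g"
      by simp
    have copies: "Inr (v, h) \<in> S" if "Inl v \<in> S" "h \<in> VH" for v h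
      using S \<open>card VH \<le> g\<close> fin(2) EH that by (rule corona_Rg_cutset_copy_subset)
    have "card (corona_V X VH) = card X * (card VH + 1)"
      using fin_X fin(2) by (rule card_corona_V)
    also have "\<dots> \<le> card ?T * (card VH + 1)"
      using X(2) extra_conn_le[OF fin(1) corona_Rg_cutset_base[OF S copies fin EH lower]]
      by (intro mult_le_mono1) simp
    also have "\<dots> = card (corona_V ?T VH)"
      using fin by (simp add: card_corona_V)
    also have "\<dots> \<le> card S"
      using finite_Rg_cutset[OF finite_corona_V[OF fin] S] copies
      by (intro card_mono) (auto simp: corona_V_def)
    finally show "card (corona_V X VH) \<le> card S" .
  qed
  with cut X(2) fin_X fin(2) show ?thesis
    by (auto simp: has_Rg_cutset_def card_corona_V)
qed

theorem theorem2p2: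
  fixes VG :: "'a set" and EG :: "('a \<times> 'a) set"
    and VH :: "'b set" and EH :: "('b \<times> 'b) set"
    and n m :: nat
  assumes "simple_graph VG EG" and "connected_graph VG EG"
    and "simple_graph VH EH" and "connected_graph VH EH"
    and "n = card VG" and "n \<ge> 2"
    and "m = card VH" and "m \<ge> 1"
  shows "(\<forall>g::nat. g \<le> m - 1 \<longrightarrow>
            has_Rg_cutset g (corona_V VG VH) (corona_E VG EG VH EH) \<and>
            extra_conn g (corona_V VG VH) (corona_E VG EG VH EH) = 1)
       \<and> (\<forall>k g :: nat. k \<ge> 1 \<longrightarrow> has_Rg_cutset k VG EG \<longrightarrow>
            k * (m + 1) < g + 1 \<longrightarrow> g + 1 \<le> (k + 1) * (m + 1) \<longrightarrow>
            has_Rg_cutset g (corona_V VG VH) (corona_E VG EG VH EH) \<and>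
            extra_conn g (corona_V VG VH) (corona_E VG EG VH EH)
              = extra_conn k VG EG * (m + 1))"
  using corona_extra_conn_small[OF assms(1-4)] corona_extra_conn_large[OF assms(1,3)] assms(5-8)
  by auto

end
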